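(* Let $K$ be a convex body in $\mathbb{R}^d$ (a compact convex set with nonempty interior). If the complement $K^c=\mathbb{R}^d\setminus K$ admits a weak tiling by translates of $K$, i.e. there is a positive, locally finite Borel measure $\mu$ on $\mathbb{R}^d$ with $\mathbf{1}_K\ast\mu=\mathbf{1}_{K^c}$ almost everywhere, then $K$ is a convex polytope.
   Context: A measure is locally finite if it gives finite mass to every ball. A convex polytope is the convex hull of finitely many points. *)

theory Defs
  imports "HOL-Analysis.Analysis"
begin

end

theory Submission
  imports Defs
begin

text \<open>
  Writing \<open>x - S\<close> for \<open>{t. x - t \<in> S}\<close>, the tiling condition says that
  \<open>\<mu>(x - K) = 1\<close> for almost every \<open>x \<notin> K\<close> and
  \<open>\<mu>(x - K) = 0\<close> for almost every \<open>x \<in> K\<close>. Since \<open>x \<mapsto> \<mu>(x - K)\<close> is upper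
  semicontinuous and \<open>x \<mapsto> \<mu>(x - interior K)\<close> lower semicontinuous, this gives
  \<open>\<mu>(p - K) \<ge> 1\<close> for every boundary point \<open>p\<close>, and \<open>\<mu>(interior K - interior K) = 0\<close>.
  If \<open>t \<in> (p - K) \<inter> (q - K)\<close> lies outside \<open>interior K - interior K\<close>, then \<open>K\<close> and
  \<open>K + t\<close> have disjoint interiors and the hyperplane separating them supports \<open>K\<close>
  at both \<open>p\<close> and \<open>q\<close>. Hence for boundary points \<open>p\<^sub>1, \<dots>, p\<^sub>n\<close> no two of which
  lie on a common supporting hyperplane, the sets \<open>p\<^sub>i - K \<subseteq> K - K\<close> are \<open>\<mu>\<close>-almost
  disjoint, so \<open>n \<le> \<mu>(K - K) < \<infinity>\<close>. But a convex body that is not a polytope has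
  infinitely many maximal proper faces, all of them exposed, and points chosen in the
  relative interiors of distinct ones never lie on a common supporting hyperplane.
\<close>

section \<open>Maximal proper faces of convex bodies\<close>

definition common_supporting_hyperplane :: "'a::euclidean_space set \<Rightarrow> 'a \<Rightarrow> 'a \<Rightarrow> bool" where
  "common_supporting_hyperplane K x y \<longleftrightarrow>
     (\<exists>a b. a \<noteq> 0 \<and> K \<subseteq> {z. a \<bullet> z \<le> b} \<and> a \<bullet> x = b \<and> a \<bullet> y = b)"

definition maximal_proper_face_of :: "'a::euclidean_space set \<Rightarrow> 'a set \<Rightarrow> bool"
    (infixr \<open>maximal'_proper'_face'_of\<close> 50) where
  "F maximal_proper_face_of K \<longleftrightarrow>
     F face_of K \<and> F \<noteq> {} \<and> F \<noteq> K \<and> (\<forall>G. G face_of K \<and> G \<noteq> K \<and> F \<subseteq> G \<longrightarrow> G = F)"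

lemma supporting_hyperplane_frontier:
  fixes K :: "'a::euclidean_space set"
  assumes "convex K" "closed K" "interior K \<noteq> {}" "x \<in> frontier K"
  obtains a where "a \<noteq> 0" "K \<subseteq> {y. a \<bullet> y \<le> a \<bullet> x}"
proof -
  have "x \<in> closure K" "x \<notin> rel_interior K"
    using assms by (auto simp: frontier_def rel_interior_nonempty_interior)
  then obtain a where "a \<noteq> 0" "\<And>y. y \<in> closure K \<Longrightarrow> a \<bullet> x \<le> a \<bullet> y"
    using supporting_hyperplane_relative_frontier[OF \<open>convex K\<close>] by metis
  then show thesis
    using that[of "- a"] closure_subset by fastforce
qed

lemma common_supporting_hyperplane_refl:
  fixes K :: "'a::euclidean_space set"
  assumes "convex K" "closed K" "interior K \<noteq> {}" "x \<in> frontier K"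
  shows "common_supporting_hyperplane K x x"
  using supporting_hyperplane_frontier[OF assms] unfolding common_supporting_hyperplane_def by blast

lemma proper_face_subset_frontier:
  fixes K :: "'a::euclidean_space set"
  assumes "F face_of K" "F \<noteq> K" "interior K \<noteq> {}"
  shows "F \<subseteq> frontier K"
  using face_of_subset_rel_frontier[OF assms(1,2)] rel_frontier_nonempty_interior[OF assms(3)] by simp

lemma proper_face_of_supporting_hyperplane:
  fixes K :: "'a::euclidean_space set"
  assumes "convex K" "interior K \<noteq> {}" "a \<noteq> 0" "K \<subseteq> {y. a \<bullet> y \<le> b}"
  shows "(K \<inter> {y. a \<bullet> y = b}) face_of K" "K \<inter> {y. a \<bullet> y = b} \<noteq> K"
proof -
  show "(K \<inter> {y. a \<bullet> y = b}) face_of K"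
    using assms by (intro face_of_Int_supporting_hyperplane_le) auto
  obtain z where "z \<in> interior K" using assms(2) by auto
  moreover have "interior K \<subseteq> {y. a \<bullet> y < b}"
    using interior_mono[OF assms(4)] assms(3) by simp
  ultimately show "K \<inter> {y. a \<bullet> y = b} \<noteq> K"
    using interior_subset by fastforce
qed

lemma proper_face_subset_maximal_proper_face:
  fixes K :: "'a::euclidean_space set"
  assumes "F face_of K" "F \<noteq> {}" "F \<noteq> K"
  obtains M where "M maximal_proper_face_of K" "F \<subseteq> M"
proof -
  define P where "P G \<longleftrightarrow> G face_of K \<and> G \<noteq> K \<and> F \<subseteq> G" for G
  have "P F" using assms unfolding P_def by auto
  moreover have "\<forall>G. P G \<longrightarrow> nat (aff_dim G + 1) < DIM('a) + 2"
  proof (intro allI impI)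
    fix G :: "'a set"
    show "nat (aff_dim G + 1) < DIM('a) + 2"
      using aff_dim_le_DIM[of G] aff_dim_geq[of G] by arith
  qed
  ultimately obtain M where M: "P M" and greatest: "\<And>G. P G \<Longrightarrow> nat (aff_dim G + 1) \<le> nat (aff_dim M + 1)"
    using Lattices_Big.ex_has_greatest_nat[of P F "\<lambda>G. nat (aff_dim G + 1)"] by blast
  have "M maximal_proper_face_of K"
    unfolding maximal_proper_face_of_def
  proof (intro conjI allI impI)
    show "M face_of K" "M \<noteq> K" "M \<noteq> {}" using M assms(2) unfolding P_def by auto
    fix G assume G: "G face_of K \<and> G \<noteq> K \<and> M \<subseteq> G"
    show "G = M"
    proof (rule ccontr)
      assume "G \<noteq> M"
      moreover have "M face_of G"
        using M G face_of_imp_subset[of G K] face_of_subset[of M K G] unfolding P_def by auto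
      ultimately have "aff_dim M < aff_dim G"
        using G face_of_aff_dim_lt[of G M] face_of_imp_convex[of G K] by auto
      moreover have "P G" using G M unfolding P_def by auto
      ultimately show False using greatest[of G] aff_dim_geq[of M] by arith
    qed
  qed
  then show thesis using that M unfolding P_def by auto
qed

lemma frontier_subset_maximal_proper_face:
  fixes K :: "'a::euclidean_space set"
  assumes "convex K" "closed K" "interior K \<noteq> {}" "x \<in> frontier K"
  obtains F where "F maximal_proper_face_of K" "x \<in> F"
proof -
  obtain a where a: "a \<noteq> 0" "K \<subseteq> {y. a \<bullet> y \<le> a \<bullet> x}"
    using supporting_hyperplane_frontier[OF assms] .
  have "x \<in> K" using assms(2,4) frontier_subset_closed by blast
  then have "x \<in> K \<inter> {y. a \<bullet> y = a \<bullet> x}" by simp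
  moreover note proper_face_of_supporting_hyperplane[OF assms(1,3) a]
  ultimately show thesis
    using proper_face_subset_maximal_proper_face that by blast
qed

lemma maximal_proper_face_eq_supporting_hyperplane:
  fixes K :: "'a::euclidean_space set"
  assumes "convex K" "interior K \<noteq> {}" and F: "F maximal_proper_face_of K"
    and x: "x \<in> rel_interior F" and a: "a \<noteq> 0" "K \<subseteq> {y. a \<bullet> y \<le> a \<bullet> x}"
  shows "K \<inter> {y. a \<bullet> y = a \<bullet> x} = F"
proof -
  let ?G = "K \<inter> {y. a \<bullet> y = a \<bullet> x}"
  have G: "?G face_of K" "?G \<noteq> K"
    using proper_face_of_supporting_hyperplane[OF assms(1,2) a] by auto
  have "F \<subseteq> K" using F face_of_imp_subset unfolding maximal_proper_face_of_def by blast
  with x have "?G \<inter> rel_interior F \<noteq> {}" using rel_interior_subset by fastforce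
  then have "F \<subseteq> ?G" using subset_of_face_of[OF G(1) \<open>F \<subseteq> K\<close>] by blast
  then show ?thesis using F G unfolding maximal_proper_face_of_def by blast
qed

lemma maximal_proper_face_exposed:
  fixes K :: "'a::euclidean_space set"
  assumes "convex K" "closed K" "interior K \<noteq> {}" and F: "F maximal_proper_face_of K"
  shows "\<exists>a b. a \<noteq> 0 \<and> K \<subseteq> {y. a \<bullet> y \<le> b} \<and> F = K \<inter> {y. a \<bullet> y = b}"
proof -
  have "F face_of K" "F \<noteq> {}" "F \<noteq> K" using F unfolding maximal_proper_face_of_def by auto
  then obtain x where x: "x \<in> rel_interior F"
    using rel_interior_eq_empty face_of_imp_convex by blast
  then have "x \<in> frontier K"
    using proper_face_subset_frontier[OF \<open>F face_of K\<close> \<open>F \<noteq> K\<close> assms(3)] rel_interior_subset by blast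
  then obtain a where "a \<noteq> 0" "K \<subseteq> {y. a \<bullet> y \<le> a \<bullet> x}"
    using supporting_hyperplane_frontier[OF assms(1-3)] by blast
  then show ?thesis
    using maximal_proper_face_eq_supporting_hyperplane[OF assms(1,3) F x] by blast
qed

lemma maximal_proper_faces_eq_if_common_supporting_hyperplane:
  fixes K :: "'a::euclidean_space set"
  assumes "convex K" "interior K \<noteq> {}"
    and "F maximal_proper_face_of K" "x \<in> rel_interior F"
    and "G maximal_proper_face_of K" "y \<in> rel_interior G"
    and "common_supporting_hyperplane K x y"
  shows "F = G"
proof -
  obtain a where a: "a \<noteq> 0" "K \<subseteq> {z. a \<bullet> z \<le> a \<bullet> x}" and "a \<bullet> y = a \<bullet> x"
    using assms(7) unfolding common_supporting_hyperplane_def by auto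
  then have "K \<subseteq> {z. a \<bullet> z \<le> a \<bullet> y}" by simp
  then have "K \<inter> {z. a \<bullet> z = a \<bullet> y} = G"
    using maximal_proper_face_eq_supporting_hyperplane[OF assms(1,2,5,6) a(1)] by blast
  then show ?thesis
    using maximal_proper_face_eq_supporting_hyperplane[OF assms(1,2,3,4) a] \<open>a \<bullet> y = a \<bullet> x\<close> by simp
qed

lemma maximal_proper_face_separates_point:
  fixes K :: "'a::euclidean_space set"
  assumes "convex K" "closed K" "interior K \<noteq> {}" "y \<notin> K"
  obtains F where "F maximal_proper_face_of K"
    "\<And>a b. a \<noteq> 0 \<Longrightarrow> K \<subseteq> {v. a \<bullet> v \<le> b} \<Longrightarrow> F = K \<inter> {v. a \<bullet> v = b} \<Longrightarrow> b < a \<bullet> y"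
proof -
  obtain z where z: "z \<in> interior K" using assms(3) by blast
  then obtain w where w: "w \<in> closed_segment z y" "w \<in> frontier K"
    using connected_Int_frontier[of "closed_segment z y" K] assms(4) interior_subset by blast
  obtain F where F: "F maximal_proper_face_of K" "w \<in> F"
    using frontier_subset_maximal_proper_face[OF assms(1-3) w(2)] .
  have "w \<noteq> z" "w \<noteq> y"
    using w(2) z assms(2,4) frontier_subset_closed unfolding frontier_def by auto
  then have w_open: "w \<in> open_segment z y" using w(1) by (simp add: open_segment_def)
  have "b < a \<bullet> y" if a: "a \<noteq> 0" "K \<subseteq> {v. a \<bullet> v \<le> b}" "F = K \<inter> {v. a \<bullet> v = b}" for a b
  proof (rule ccontr)
    let ?H = "{v. a \<bullet> v \<le> b}"
    assume "\<not> b < a \<bullet> y"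
    then have "y \<in> closure ?H" by (simp add: closure_closed closed_halfspace_le)
    moreover have "z \<in> interior ?H" using interior_mono[OF a(2)] z by blast
    ultimately have "w \<in> interior ?H"
      using in_interior_closure_convex_segment[OF convex_halfspace_le] w_open by blast
    then show False using a F(2) by simp
  qed
  then show thesis using that F(1) by blast
qed

lemma polyhedron_if_finite_maximal_proper_faces:
  fixes K :: "'a::euclidean_space set"
  assumes "convex K" "closed K" "interior K \<noteq> {}"
    and fin: "finite {F. F maximal_proper_face_of K}"
  shows "polyhedron K"
proof -
  let ?M = "{F. F maximal_proper_face_of K}"
  obtain a b where ab: "\<And>F. F \<in> ?M \<Longrightarrow>
      a F \<noteq> 0 \<and> K \<subseteq> {y. a F \<bullet> y \<le> b F} \<and> F = K \<inter> {y. a F \<bullet> y = b F}"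
    using maximal_proper_face_exposed[OF assms(1-3)] by (simp only: mem_Collect_eq) metis
  have "K = (\<Inter>F\<in>?M. {y. a F \<bullet> y \<le> b F})"
  proof
    show "K \<subseteq> (\<Inter>F\<in>?M. {y. a F \<bullet> y \<le> b F})" using ab by blast
    show "(\<Inter>F\<in>?M. {y. a F \<bullet> y \<le> b F}) \<subseteq> K"
    proof
      fix y assume y: "y \<in> (\<Inter>F\<in>?M. {y. a F \<bullet> y \<le> b F})"
      show "y \<in> K"
      proof (rule ccontr)
        assume "y \<notin> K"
        then obtain F where "F \<in> ?M" "b F < a F \<bullet> y"
          using maximal_proper_face_separates_point[OF assms(1-3)] ab by (metis mem_Collect_eq)
        with y show False by fastforce
      qed
    qed
  qed
  moreover have "polyhedron (\<Inter>F\<in>?M. {y. a F \<bullet> y \<le> b F})"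
    using fin by (intro polyhedron_Inter) (auto simp: polyhedron_halfspace_le)
  ultimately show ?thesis by simp
qed

lemma infinite_maximal_proper_faces_if_not_polytope:
  fixes K :: "'a::euclidean_space set"
  assumes "compact K" "convex K" "interior K \<noteq> {}" "\<not> polytope K"
  shows "infinite {F. F maximal_proper_face_of K}"
  using polyhedron_if_finite_maximal_proper_faces[OF assms(2) compact_imp_closed assms(3)] assms(1,4)
  by (auto simp: polytope_eq_bounded_polyhedron compact_imp_bounded)

lemma frontier_points_without_common_supporting_hyperplane:
  fixes K :: "'a::euclidean_space set"
  assumes "compact K" "convex K" "interior K \<noteq> {}" "\<not> polytope K"
  obtains P where "P \<subseteq> frontier K" "finite P" "card P = n"
    "pairwise (\<lambda>x y. \<not> common_supporting_hyperplane K x y) P"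
proof -
  have "closed K" using assms(1) compact_imp_closed by blast
  obtain \<F> where \<F>: "finite \<F>" "card \<F> = n" "\<F> \<subseteq> {F. F maximal_proper_face_of K}"
    using infinite_arbitrarily_large[OF infinite_maximal_proper_faces_if_not_polytope[OF assms]]
    by blast
  have "\<forall>F\<in>\<F>. \<exists>x. x \<in> rel_interior F"
  proof
    fix F assume "F \<in> \<F>"
    then have "F face_of K" "F \<noteq> {}" using \<F>(3) unfolding maximal_proper_face_of_def by auto
    then show "\<exists>x. x \<in> rel_interior F" using rel_interior_eq_empty face_of_imp_convex by blast
  qed
  then obtain p where p: "\<And>F. F \<in> \<F> \<Longrightarrow> p F \<in> rel_interior F" by metis
  have eq: "F = G" if "F \<in> \<F>" "G \<in> \<F>" "common_supporting_hyperplane K (p F) (p G)" for F G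
    using maximal_proper_faces_eq_if_common_supporting_hyperplane[OF assms(2,3) _ p[OF that(1)] _ p[OF that(2)] that(3)]
      \<F>(3) that(1,2) by blast
  have front: "p F \<in> frontier K" if "F \<in> \<F>" for F
  proof -
    have "F face_of K" "F \<noteq> K" using \<F>(3) that unfolding maximal_proper_face_of_def by auto
    then show ?thesis
      using proper_face_subset_frontier[OF _ _ assms(3)] rel_interior_subset p[OF that] by blast
  qed
  have "inj_on p \<F>"
  proof (rule inj_onI)
    fix F G assume "F \<in> \<F>" "G \<in> \<F>" "p F = p G"
    then show "F = G"
      using eq common_supporting_hyperplane_refl[OF assms(2) \<open>closed K\<close> assms(3) front[OF \<open>F \<in> \<F>\<close>]]
      by simp
  qed
  show thesis
  proof
    show "p ` \<F> \<subseteq> frontier K" "finite (p ` \<F>)" "card (p ` \<F>) = n"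
      using front \<F> card_image[OF \<open>inj_on p \<F>\<close>] by auto
    show "pairwise (\<lambda>x y. \<not> common_supporting_hyperplane K x y) (p ` \<F>)"
      unfolding pairwise_def using eq by blast
  qed
qed

section \<open>Semicontinuity of \<open>x \<mapsto> \<mu>(x - S)\<close>\<close>

lemma reflected_translate_eq_image:
  fixes x :: "'a::ab_group_add"
  shows "{t. x - t \<in> S} = (\<lambda>y. x - y) ` S"
  by (auto intro: image_eqI[where x="x - _"])

lemma open_reflected_translate: "open S \<Longrightarrow> open {t. x - t \<in> S}"
  for x :: "'a::real_normed_vector"
  using continuous_open_vimage[of S "\<lambda>t. x - t"] by (simp add: vimage_def continuous_intros)

lemma closed_reflected_translate: "closed S \<Longrightarrow> closed {t. x - t \<in> S}"
  for x :: "'a::real_normed_vector"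
  using continuous_closed_vimage[of S "\<lambda>t. x - t"] by (simp add: vimage_def continuous_intros)

lemma compact_reflected_translate: "compact S \<Longrightarrow> compact {t. x - t \<in> S}"
  for x :: "'a::real_normed_vector"
  unfolding reflected_translate_eq_image
  by (intro compact_continuous_image continuous_intros)

lemma emeasure_bounded_less_top:
  fixes \<mu> :: "'a::euclidean_space measure"
  assumes "sets \<mu> = sets borel" "\<And>x r. emeasure \<mu> (ball x r) < \<infinity>" "bounded S"
  shows "emeasure \<mu> S < \<infinity>"
proof -
  obtain r where "S \<subseteq> ball 0 r" using bounded_subset_ballD[OF assms(3)] by blast
  then have "emeasure \<mu> S \<le> emeasure \<mu> (ball 0 r)" using assms(1) by (intro emeasure_mono) auto
  then show ?thesis using assms(2) by (rule le_less_trans)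
qed

lemma AE_lborel_ex_in_open:
  fixes V :: "'a::euclidean_space set"
  assumes "AE x in lborel. P x" "open V" "V \<noteq> {}"
  shows "\<exists>x\<in>V. P x"
proof (rule ccontr)
  assume "\<not> (\<exists>x\<in>V. P x)"
  obtain c r where "0 < r" "ball c r \<subseteq> V" using assms(2,3) open_contains_ball by blast
  have "AE x in lborel. x \<notin> ball c r"
    using assms(1) by eventually_elim (use \<open>ball c r \<subseteq> V\<close> \<open>\<not> (\<exists>x\<in>V. P x)\<close> in blast)
  then have "emeasure lborel (ball c r) = 0" by (subst (asm) AE_iff_measurable) auto
  moreover have "0 < emeasure lborel (ball c r)" using \<open>0 < r\<close> by (simp add: emeasure_ball)
  ultimately show False by simp
qed

lemma open_eq_Union_infdist_gt:
  fixes U :: "'a::metric_space set"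
  assumes "open U" "U \<noteq> UNIV"
  shows "U = (\<Union>n. {y. 1 / Suc n < infdist y (- U)})"
proof
  show "U \<subseteq> (\<Union>n. {y. 1 / Suc n < infdist y (- U)})"
  proof
    fix y assume "y \<in> U"
    then have "0 < infdist y (- U)"
      using infdist_pos_not_in_closed[of "- U" y] assms by auto
    then obtain n where "inverse (Suc n) < infdist y (- U)"
      using reals_Archimedean by blast
    then show "y \<in> (\<Union>n. {y. 1 / Suc n < infdist y (- U)})" by (auto simp: inverse_eq_divide)
  qed
  show "(\<Union>n. {y. 1 / Suc n < infdist y (- U)}) \<subseteq> U"
  proof
    fix y assume "y \<in> (\<Union>n. {y. 1 / Suc n < infdist y (- U)})"
    then obtain n where n: "1 / Suc n < infdist y (- U)" by blast
    have "0 < infdist y (- U)" by (rule less_trans[OF _ n]) simp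
    then have "y \<notin> - U" by (metis infdist_zero less_irrefl)
    then show "y \<in> U" by simp
  qed
qed

lemma closed_eq_Inter_infdist_le:
  fixes C :: "'a::metric_space set"
  assumes "closed C" "C \<noteq> {}"
  shows "C = (\<Inter>n. {y. infdist y C \<le> 1 / Suc n})"
proof
  show "C \<subseteq> (\<Inter>n. {y. infdist y C \<le> 1 / Suc n})" by auto
  show "(\<Inter>n. {y. infdist y C \<le> 1 / Suc n}) \<subseteq> C"
  proof
    fix y assume y: "y \<in> (\<Inter>n. {y. infdist y C \<le> 1 / Suc n})"
    show "y \<in> C"
    proof (rule ccontr)
      assume "y \<notin> C"
      then have "0 < infdist y C" using infdist_pos_not_in_closed[OF assms] by simp
      then obtain n where "inverse (Suc n) < infdist y C"
        using reals_Archimedean by blast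
      moreover have "infdist y C \<le> 1 / Suc n" using y by blast
      ultimately show False by (simp add: inverse_eq_divide)
    qed
  qed
qed

lemma emeasure_reflected_translate_lower_semicontinuous:
  fixes \<mu> :: "'a::euclidean_space measure"
  assumes sets: "sets \<mu> = sets borel" and "open U" and c: "c < emeasure \<mu> {t. x - t \<in> U}"
  shows "\<forall>\<^sub>F x' in nhds x. c < emeasure \<mu> {t. x' - t \<in> U}"
proof (cases "U = UNIV")
  case True
  then show ?thesis using c by simp
next
  case False
  define V where "V n = {y. 1 / Suc n < infdist y (- U)}" for n :: nat
  have "open (V n)" for n unfolding V_def by (intro open_Collect_less continuous_intros)
  have "(SUP n. emeasure \<mu> {t. x - t \<in> V n}) = emeasure \<mu> (\<Union>n. {t. x - t \<in> V n})"
  proof (rule SUP_emeasure_incseq)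
    show "range (\<lambda>n. {t. x - t \<in> V n}) \<subseteq> sets \<mu>"
      using open_reflected_translate[OF \<open>open (V _)\<close>] sets by auto
    have "1 / real (Suc n) \<le> 1 / real (Suc m)" if "m \<le> n" for m n
      using that by (intro frac_le) auto
    then show "incseq (\<lambda>n. {t. x - t \<in> V n})"
      unfolding incseq_def V_def by (force intro: le_less_trans)
  qed
  also have "(\<Union>n. {t. x - t \<in> V n}) = {t. x - t \<in> U}"
    using open_eq_Union_infdist_gt[OF \<open>open U\<close> False] unfolding V_def by blast
  finally have "c < (SUP n. emeasure \<mu> {t. x - t \<in> V n})" using c by simp
  then obtain n where n: "c < emeasure \<mu> {t. x - t \<in> V n}" by (auto simp: less_SUP_iff)
  show ?thesis
    unfolding eventually_nhds_metric
  proof (intro exI[of _ "1 / Suc n"] conjI allI impI)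
    fix x' assume x': "dist x' x < 1 / Suc n"
    have "{t. x - t \<in> V n} \<subseteq> {t. x' - t \<in> U}"
    proof
      fix t assume t: "t \<in> {t. x - t \<in> V n}"
      show "t \<in> {t. x' - t \<in> U}"
      proof (rule ccontr)
        assume "t \<notin> {t. x' - t \<in> U}"
        then have "infdist (x - t) (- U) \<le> dist x' x"
          using infdist_le[of "x' - t" "- U" "x - t"] by (simp add: dist_norm norm_minus_commute)
        then show False using t x' unfolding V_def by simp
      qed
    qed
    then have "emeasure \<mu> {t. x - t \<in> V n} \<le> emeasure \<mu> {t. x' - t \<in> U}"
      using sets open_reflected_translate[OF \<open>open U\<close>] by (intro emeasure_mono) auto
    then show "c < emeasure \<mu> {t. x' - t \<in> U}" using n by simp
  qed simp
qed

lemma emeasure_reflected_translate_upper_semicontinuous: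
  fixes \<mu> :: "'a::euclidean_space measure"
  assumes sets: "sets \<mu> = sets borel" and fin: "\<And>x r. emeasure \<mu> (ball x r) < \<infinity>"
    and "compact C" and c: "emeasure \<mu> {t. x - t \<in> C} < c"
  shows "\<forall>\<^sub>F x' in nhds x. emeasure \<mu> {t. x' - t \<in> C} < c"
proof (cases "C = {}")
  case True
  then show ?thesis using c by simp
next
  case False
  define V where "V n = {y. infdist y C \<le> 1 / Suc n}" for n :: nat
  have "closed (V n)" for n unfolding V_def by (intro closed_Collect_le continuous_intros)
  have V_sets: "{t. x - t \<in> V n} \<in> sets \<mu>" for n
    using closed_reflected_translate[OF \<open>closed (V n)\<close>] sets by simp
  have "compact (V 0)" using compact_infdist_le[OF False \<open>compact C\<close>, of 1] by (simp add: V_def)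
  then have "emeasure \<mu> {t. x - t \<in> V 0} \<noteq> \<infinity>"
    using emeasure_bounded_less_top[OF sets fin compact_imp_bounded[OF compact_reflected_translate]]
    by (simp add: less_top)
  then have "(INF n. emeasure \<mu> {t. x - t \<in> V n}) = emeasure \<mu> (\<Inter>n. {t. x - t \<in> V n})"
  proof (intro INF_emeasure_decseq' V_sets exI)
    have "1 / real (Suc n) \<le> 1 / real (Suc m)" if "m \<le> n" for m n
      using that by (intro frac_le) auto
    then show "decseq (\<lambda>n. {t. x - t \<in> V n})"
      unfolding decseq_def V_def by (auto intro: order_trans)
  qed
  also have "(\<Inter>n. {t. x - t \<in> V n}) = {t. x - t \<in> C}"
    using closed_eq_Inter_infdist_le[OF compact_imp_closed[OF \<open>compact C\<close>] False]
    unfolding V_def by blast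
  finally have "(INF n. emeasure \<mu> {t. x - t \<in> V n}) < c" using c by simp
  then obtain n where n: "emeasure \<mu> {t. x - t \<in> V n} < c" by (auto simp: INF_less_iff)
  show ?thesis
    unfolding eventually_nhds_metric
  proof (intro exI[of _ "1 / Suc n"] conjI allI impI)
    fix x' assume x': "dist x' x < 1 / Suc n"
    have "{t. x' - t \<in> C} \<subseteq> {t. x - t \<in> V n}"
    proof
      fix t assume "t \<in> {t. x' - t \<in> C}"
      then have "infdist (x - t) C \<le> dist x' x"
        using infdist_le[of "x' - t" C "x - t"] by (simp add: dist_norm norm_minus_commute)
      then show "t \<in> {t. x - t \<in> V n}" using x' unfolding V_def by simp
    qed
    then have "emeasure \<mu> {t. x' - t \<in> C} \<le> emeasure \<mu> {t. x - t \<in> V n}"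
      using V_sets by (intro emeasure_mono) auto
    then show "emeasure \<mu> {t. x' - t \<in> C} < c" using n by simp
  qed simp
qed

section \<open>Weak tilings of the complement\<close>

lemma AE_lborel_frequently_in_open:
  fixes V :: "'a::euclidean_space set"
  assumes "AE x in lborel. P x" "open V" "z \<in> closure V"
  shows "\<exists>\<^sub>F x in nhds z. x \<in> V \<and> P x"
  unfolding frequently_def
proof
  assume "\<forall>\<^sub>F x in nhds z. \<not> (x \<in> V \<and> P x)"
  then obtain S where S: "open S" "z \<in> S" "\<And>x. x \<in> S \<Longrightarrow> \<not> (x \<in> V \<and> P x)"
    unfolding eventually_nhds by blast
  have "S \<inter> V \<noteq> {}" using S(1,2) assms(3) open_Int_closure_eq_empty by blast
  then obtain x where "x \<in> S \<inter> V" "P x"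
    using AE_lborel_ex_in_open[OF assms(1)] S(1) assms(2) by blast
  with S(3) show False by blast
qed

lemma nn_integral_indicator_reflected_translate:
  fixes \<mu> :: "'a::euclidean_space measure"
  assumes "sets \<mu> = sets borel" "closed A"
  shows "(\<integral>\<^sup>+ y. indicator A (x - y) \<partial>\<mu>) = emeasure \<mu> {y. x - y \<in> A}"
proof -
  have "closed {y. x - y \<in> A}" using closed_reflected_translate[OF assms(2)] .
  then have "{y. x - y \<in> A} \<in> sets \<mu>" using assms(1) by simp
  moreover have "(\<lambda>y. indicator A (x - y) :: ennreal) = indicator {y. x - y \<in> A}"
    by (auto simp: indicator_def)
  ultimately show ?thesis by simp
qed

lemma weak_tiling_interior_null:
  fixes K :: "'a::euclidean_space set" and \<mu> :: "'a measure"
  assumes "closed K" and sets: "sets \<mu> = sets borel"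
    and tiling: "AE x in lborel. (\<integral>\<^sup>+ y. indicator K (x - y) \<partial>\<mu>) = indicator (- K) x"
    and z: "z \<in> interior K"
  shows "emeasure \<mu> {t. z - t \<in> interior K} = 0"
proof (rule ccontr)
  assume "emeasure \<mu> {t. z - t \<in> interior K} \<noteq> 0"
  then have "0 < emeasure \<mu> {t. z - t \<in> interior K}" by (simp add: zero_less_iff_neq_zero)
  then have "\<forall>\<^sub>F x in nhds z. 0 < emeasure \<mu> {t. x - t \<in> interior K}"
    by (rule emeasure_reflected_translate_lower_semicontinuous[OF sets open_interior])
  moreover have "\<exists>\<^sub>F x in nhds z. x \<in> interior K \<and>
      (\<integral>\<^sup>+ y. indicator K (x - y) \<partial>\<mu>) = indicator (- K) x"
    using AE_lborel_frequently_in_open[OF tiling open_interior] z closure_subset by blast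
  ultimately obtain x where x: "0 < emeasure \<mu> {t. x - t \<in> interior K}" "x \<in> interior K"
      "(\<integral>\<^sup>+ y. indicator K (x - y) \<partial>\<mu>) = indicator (- K) x"
    using frequently_eventually_conj frequently_ex by blast
  have "emeasure \<mu> {t. x - t \<in> interior K} \<le> emeasure \<mu> {t. x - t \<in> K}"
    using sets closed_reflected_translate[OF \<open>closed K\<close>] interior_subset
    by (intro emeasure_mono) auto
  also have "\<dots> = 0"
    using x(2,3) interior_subset nn_integral_indicator_reflected_translate[OF sets \<open>closed K\<close>]
    by (auto simp: indicator_def)
  finally show False using x(1) by simp
qed

lemma weak_tiling_frontier_ge_1:
  fixes K :: "'a::euclidean_space set" and \<mu> :: "'a measure"
  assumes "compact K" and sets: "sets \<mu> = sets borel"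
    and fin: "\<And>x r. emeasure \<mu> (ball x r) < \<infinity>"
    and tiling: "AE x in lborel. (\<integral>\<^sup>+ y. indicator K (x - y) \<partial>\<mu>) = indicator (- K) x"
    and z: "z \<in> frontier K"
  shows "1 \<le> emeasure \<mu> {t. z - t \<in> K}"
proof (rule ccontr)
  have "closed K" using \<open>compact K\<close> compact_imp_closed by blast
  assume "\<not> 1 \<le> emeasure \<mu> {t. z - t \<in> K}"
  then have "\<forall>\<^sub>F x in nhds z. emeasure \<mu> {t. x - t \<in> K} < 1"
    using emeasure_reflected_translate_upper_semicontinuous[OF sets fin \<open>compact K\<close>] by simp
  moreover have "\<exists>\<^sub>F x in nhds z. x \<in> - K \<and>
      (\<integral>\<^sup>+ y. indicator K (x - y) \<partial>\<mu>) = indicator (- K) x"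
  proof (rule AE_lborel_frequently_in_open[OF tiling])
    show "open (- K)" using \<open>closed K\<close> by (simp add: open_Compl)
    show "z \<in> closure (- K)" using z by (simp add: closure_complement frontier_def)
  qed
  ultimately obtain x where "emeasure \<mu> {t. x - t \<in> K} < 1" "x \<notin> K"
      "(\<integral>\<^sup>+ y. indicator K (x - y) \<partial>\<mu>) = indicator (- K) x"
    using frequently_eventually_conj frequently_ex by blast
  then show False using nn_integral_indicator_reflected_translate[OF sets \<open>closed K\<close>] by simp
qed

lemma weak_tiling_interior_differences_null:
  fixes K :: "'a::euclidean_space set" and \<mu> :: "'a measure"
  assumes "closed K" and sets: "sets \<mu> = sets borel"
    and tiling: "AE x in lborel. (\<integral>\<^sup>+ y. indicator K (x - y) \<partial>\<mu>) = indicator (- K) x"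
  shows "{z - w | z w. z \<in> interior K \<and> w \<in> interior K} \<in> null_sets \<mu>"
proof -
  define \<U> where "\<U> = (\<lambda>z. {t. z - t \<in> interior K}) ` interior K"
  have open_\<U>: "open U" if "U \<in> \<U>" for U
    using that open_reflected_translate[OF open_interior] unfolding \<U>_def by blast
  obtain \<U>' where "\<U>' \<subseteq> \<U>" "countable \<U>'" "\<Union>\<U>' = \<Union>\<U>"
    using Lindelof[OF open_\<U>] by blast
  have "U \<in> null_sets \<mu>" if "U \<in> \<U>" for U
  proof -
    have "U \<in> sets \<mu>" using open_\<U>[OF that] sets by simp
    then show ?thesis
      using that weak_tiling_interior_null[OF assms] unfolding \<U>_def by auto
  qed
  then have "\<Union>\<U>' \<in> null_sets \<mu>"
    using null_sets_UN'[OF \<open>countable \<U>'\<close>, of "\<lambda>U. U"] \<open>\<U>' \<subseteq> \<U>\<close> by auto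
  moreover have "{z - w | z w. z \<in> interior K \<and> w \<in> interior K} = \<Union>\<U>"
    unfolding \<U>_def by force
  ultimately show ?thesis using \<open>\<Union>\<U>' = \<Union>\<U>\<close> by simp
qed

lemma common_supporting_hyperplane_if_translate_interiors_disjoint:
  fixes K :: "'a::euclidean_space set"
  assumes "convex K" "closed K" "interior K \<noteq> {}"
    and t: "t \<notin> {z - w | z w. z \<in> interior K \<and> w \<in> interior K}"
    and "x \<in> K" "x - t \<in> K" "y \<in> K" "y - t \<in> K"
  shows "common_supporting_hyperplane K x y"
proof -
  have "interior K \<inter> (\<lambda>w. w + t) ` interior K = {}"
    using t by force
  then obtain a b where "a \<noteq> 0" and below: "\<forall>w\<in>interior K. a \<bullet> w \<le> b"
      and above: "\<forall>w\<in>(\<lambda>w. w + t) ` interior K. b \<le> a \<bullet> w"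
    using separating_hyperplane_sets[of "interior K" "(\<lambda>w. w + t) ` interior K"] assms(3)
      convex_interior[OF assms(1)] convex_translation[of "interior K" t]
    by (auto simp: add.commute)
  have K: "K = closure (interior K)"
    using convex_closure_interior[OF assms(1,3)] assms(2) by (simp add: closure_closed)
  have "K \<subseteq> {w. a \<bullet> w \<le> b}"
    using closure_minimal[of "interior K" "{w. a \<bullet> w \<le> b}"] below K
    by (auto simp: closed_halfspace_le)
  moreover have "K \<subseteq> {w. b - a \<bullet> t \<le> a \<bullet> w}"
  proof -
    have "interior K \<subseteq> {w. b - a \<bullet> t \<le> a \<bullet> w}"
    proof
      fix w assume "w \<in> interior K"
      then have "b \<le> a \<bullet> (w + t)" using above by blast
      then show "w \<in> {w. b - a \<bullet> t \<le> a \<bullet> w}" by (simp add: inner_add_right)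
    qed
    then show ?thesis
      using closure_minimal[OF _ closed_halfspace_ge] K by metis
  qed
  ultimately show ?thesis
    unfolding common_supporting_hyperplane_def using \<open>a \<noteq> 0\<close> assms(5-8)
    by (intro exI[of _ a] exI[of _ b]) (force simp: inner_diff_right)
qed

lemma reflected_translates_Int_subset_interior_differences:
  fixes K :: "'a::euclidean_space set"
  assumes "convex K" "closed K" "interior K \<noteq> {}" "x \<in> K" "y \<in> K"
    and "\<not> common_supporting_hyperplane K x y"
  shows "{t. x - t \<in> K} \<inter> {t. y - t \<in> K} \<subseteq> {z - w | z w. z \<in> interior K \<and> w \<in> interior K}"
  using common_supporting_hyperplane_if_translate_interiors_disjoint[OF assms(1-3) _ assms(4) _ assms(5)]
    assms(6) by blast

lemma sum_emeasure_almost_disjoint: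
  assumes "finite I" "\<And>i. i \<in> I \<Longrightarrow> A i \<in> sets M" "N \<in> null_sets M"
    and "\<And>i j. i \<in> I \<Longrightarrow> j \<in> I \<Longrightarrow> i \<noteq> j \<Longrightarrow> A i \<inter> A j \<subseteq> N"
  shows "(\<Sum>i\<in>I. emeasure M (A i)) = emeasure M (\<Union>i\<in>I. A i)"
proof -
  have "(\<Sum>i\<in>I. emeasure M (A i)) = (\<Sum>i\<in>I. emeasure M (A i - N))"
    using assms(2,3) by (intro sum.cong) (auto intro: emeasure_Diff_null_set[symmetric])
  also have "\<dots> = emeasure M (\<Union>i\<in>I. A i - N)"
    using assms by (intro sum_emeasure) (auto simp: disjoint_family_on_def)
  also have "(\<Union>i\<in>I. A i - N) = (\<Union>i\<in>I. A i) - N" by blast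
  also have "emeasure M \<dots> = emeasure M (\<Union>i\<in>I. A i)"
    using assms(1-3) by (intro emeasure_Diff_null_set) auto
  finally show ?thesis .
qed

lemma weak_tiling_card_le:
  fixes K :: "'a::euclidean_space set" and \<mu> :: "'a measure"
  assumes "compact K" "convex K" "interior K \<noteq> {}"
    and sets: "sets \<mu> = sets borel"
    and fin: "\<And>x r. emeasure \<mu> (ball x r) < \<infinity>"
    and tiling: "AE x in lborel. (\<integral>\<^sup>+ y. indicator K (x - y) \<partial>\<mu>) = indicator (- K) x"
    and P: "P \<subseteq> frontier K" "finite P" "pairwise (\<lambda>x y. \<not> common_supporting_hyperplane K x y) P"
  shows "of_nat (card P) \<le> emeasure \<mu> {x - y | x y. x \<in> K \<and> y \<in> K}"
proof -
  have "closed K" using \<open>compact K\<close> compact_imp_closed by blast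
  let ?S = "\<lambda>p. {t. p - t \<in> K}"
  let ?D = "{z - w | z w. z \<in> interior K \<and> w \<in> interior K}"
  have S_sets: "?S p \<in> sets \<mu>" for p
    using closed_reflected_translate[OF \<open>closed K\<close>] sets by simp
  have P_K: "P \<subseteq> K" using P(1) \<open>closed K\<close> frontier_subset_closed by blast
  have overlap: "?S p \<inter> ?S q \<subseteq> ?D" if "p \<in> P" "q \<in> P" "p \<noteq> q" for p q
    using reflected_translates_Int_subset_interior_differences[OF assms(2) \<open>closed K\<close> assms(3)]
      that P_K P(3) unfolding pairwise_def by blast
  have "of_nat (card P) = (\<Sum>p\<in>P. 1 :: ennreal)" by simp
  also have "\<dots> \<le> (\<Sum>p\<in>P. emeasure \<mu> (?S p))"
    using weak_tiling_frontier_ge_1[OF \<open>compact K\<close> sets fin tiling] P(1) by (intro sum_mono) auto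
  also have "\<dots> = emeasure \<mu> (\<Union>p\<in>P. ?S p)"
    using sum_emeasure_almost_disjoint[OF P(2) S_sets
        weak_tiling_interior_differences_null[OF \<open>closed K\<close> sets tiling] overlap] .
  also have "\<dots> \<le> emeasure \<mu> {x - y | x y. x \<in> K \<and> y \<in> K}"
  proof (rule emeasure_mono)
    show "(\<Union>p\<in>P. ?S p) \<subseteq> {x - y | x y. x \<in> K \<and> y \<in> K}"
    proof (intro UN_least subsetI)
      fix p t assume "p \<in> P" "t \<in> ?S p"
      then have "p \<in> K" "p - t \<in> K" "t = p - (p - t)" using P_K by auto
      then show "t \<in> {x - y | x y. x \<in> K \<and> y \<in> K}" by blast
    qed
    show "{x - y | x y. x \<in> K \<and> y \<in> K} \<in> sets \<mu>"
      using compact_differences[OF \<open>compact K\<close> \<open>compact K\<close>] sets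
      by (simp add: borel_compact)
  qed
  finally show ?thesis .
qed

theorem theorem4p1:
  fixes K :: "'a::euclidean_space set" and \<mu> :: "'a measure"
  assumes "compact K" and "convex K" and "interior K \<noteq> {}"
    and "sets \<mu> = sets borel"
    and "\<And>x r. emeasure \<mu> (ball x r) < \<infinity>"
    and "AE x in lborel. (\<integral>\<^sup>+ y. indicator K (x - y) \<partial>\<mu>) = indicator (- K) x"
  shows "polytope K"
proof (rule ccontr)
  assume "\<not> polytope K"
  let ?D = "{x - y | x y. x \<in> K \<and> y \<in> K}"
  have "emeasure \<mu> ?D < \<infinity>"
    using emeasure_bounded_less_top[OF assms(4,5)] compact_differences[OF assms(1,1)]
    by (simp add: compact_imp_bounded)
  then obtain n :: nat where n: "emeasure \<mu> ?D < of_nat n"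
    using ennreal_Ex_less_of_nat[of "emeasure \<mu> ?D"] by auto
  obtain P where "P \<subseteq> frontier K" "finite P" "card P = n"
      "pairwise (\<lambda>x y. \<not> common_supporting_hyperplane K x y) P"
    using frontier_points_without_common_supporting_hyperplane[OF assms(1-3) \<open>\<not> polytope K\<close>] .
  then have "of_nat n \<le> emeasure \<mu> ?D"
    using weak_tiling_card_le[OF assms] by blast
  with n show False by simp
qed

end
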